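(* Let $n=4$, $m=3$, $b=(1,0,0)^T$, $C=\mathrm{diag}(1,0,0,0)$, and let $A^1,A^2,A^3\in\mathbb{S}^4$ be such that for all $y\in\mathbb{R}^3$ $$C-\sum_{i=1}^3A^iy_i=\begin{pmatrix}1-y_1&0&-y_3&-y_3\\0&-y_2&-y_1&0\\-y_3&-y_1&-y_3&0\\-y_3&0&0&0\end{pmatrix},$$ i.e. $A^1$ has entries $(1,1)=1$, $(2,3)=(3,2)=1$ and zeros elsewhere; $A^2$ has entry $(2,2)=1$ and zeros elsewhere; $A^3$ has entries $(1,3)=(3,1)=(1,4)=(4,1)=(3,3)=1$ and zeros elsewhere. For the associated pair $\mathbf{P},\mathbf{D}$ (with $v(\mathbf{P})=1$, $v(\mathbf{D})=0$), the limiting pd-regularized optimal value function satisfies: 1. $v_a(\theta)=v(\mathbf{P})=1$ for all $\theta\in[0,\pi/2)$; 2. $v_a(\pi/2)=v(\mathbf{D})=0$.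
   Context: $\mathbf{P}$: $\min_X C\bullet X$ s.t. $A^i\bullet X=b_i$ ($i=1,\dots,m$), $X\succeq 0$; $\mathbf{D}$: $\max_y b^Ty$ s.t. $C-\sum_iA^iy_i\succeq 0$; $v(\cdot)$ denotes optimal value. For $\varepsilon,\eta\ge0$: $\mathbf{P}(\varepsilon,\eta)$: $\min_X (C+\varepsilon I)\bullet X$ s.t. $A^i\bullet X=b_i+\eta A^i\bullet I$, $X\succeq0$; $\mathbf{D}(\varepsilon,\eta)$: $\max_y \sum_i(b_i+\eta A^i\bullet I)y_i$ s.t. $C-\sum_iA^iy_i+\varepsilon I\succeq 0$. For $(\varepsilon,\eta)\ne(0,0)$, $v(\varepsilon,\eta)$ is the common optimal value of these two problems, and $v_a(\theta)=\lim_{t\downarrow0}v(t\cos\theta,t\sin\theta)$ for $\theta\in[0,\pi/2]$. *)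

theory Defs
  imports "HOL-Analysis.Analysis" "HOL-Library.Numeral_Type"
begin

definition psd :: "real^'n^'n \<Rightarrow> bool" where
  "psd X \<longleftrightarrow> transpose X = X \<and> (\<forall>x. 0 \<le> x \<bullet> (X *v x))"

definition frob :: "real^'n^'n \<Rightarrow> real^'n^'n \<Rightarrow> real" (infixl "\<bullet>\<^sub>F" 70) where
  "A \<bullet>\<^sub>F X = (\<Sum>i\<in>UNIV. \<Sum>j\<in>UNIV. A$i$j * X$i$j)"

definition primal_val :: "real^'n^'n \<Rightarrow> ('m \<Rightarrow> real^'n^'n) \<Rightarrow> real^'m \<Rightarrow> real" where
  "primal_val C A b = Inf {C \<bullet>\<^sub>F X | X. psd X \<and> (\<forall>i. A i \<bullet>\<^sub>F X = b$i)}"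

definition dual_val :: "real^'n^'n \<Rightarrow> ('m::finite \<Rightarrow> real^'n^'n) \<Rightarrow> real^'m \<Rightarrow> real" where
  "dual_val C A b = Sup {b \<bullet> y | y. psd (C - (\<Sum>i\<in>UNIV. y$i *\<^sub>R A i))}"

text \<open>Regularized value v(eps,eta): optimal value of P(eps,eta) (which equals that of
  D(eps,eta) for (eps,eta) \<noteq> (0,0)).\<close>
definition v_reg :: "real^'n^'n \<Rightarrow> ('m \<Rightarrow> real^'n^'n) \<Rightarrow> real^'m \<Rightarrow> real \<Rightarrow> real \<Rightarrow> real" where
  "v_reg C A b \<epsilon> \<eta> =
     primal_val (C + \<epsilon> *\<^sub>R mat 1) A (\<chi> i. b$i + \<eta> * (A i \<bullet>\<^sub>F mat 1))"

text \<open>The concrete example; indices 1,2,3,4 of type 4 (where 4 = 0 in type 4, still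
  a fourth distinct index).\<close>

definition C_ex :: "real^4^4" where
  "C_ex = (\<chi> i j. if i = 1 \<and> j = 1 then 1 else 0)"

definition A1_ex :: "real^4^4" where
  "A1_ex = (\<chi> i j. if (i = 1 \<and> j = 1) \<or> (i = 2 \<and> j = 3) \<or> (i = 3 \<and> j = 2) then 1 else 0)"

definition A2_ex :: "real^4^4" where
  "A2_ex = (\<chi> i j. if i = 2 \<and> j = 2 then 1 else 0)"

definition A3_ex :: "real^4^4" where
  "A3_ex = (\<chi> i j. if (i = 1 \<and> j = 3) \<or> (i = 3 \<and> j = 1) \<or> (i = 1 \<and> j = 4) \<or>
                         (i = 4 \<and> j = 1) \<or> (i = 3 \<and> j = 3) then 1 else 0)"

definition A_ex :: "3 \<Rightarrow> real^4^4" where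
  "A_ex k = (if k = 1 then A1_ex else if k = 2 then A2_ex else A3_ex)"

definition b_ex :: "real^3" where
  "b_ex = (\<chi> i. if i = 1 then 1 else 0)"

end

theory Submission
  imports Defs
begin

text \<open>In \<open>P\<close> the constraint \<open>X\<^sub>2\<^sub>2 = 0\<close> forces the second row of a psd \<open>X\<close> to vanish,
  hence \<open>X\<^sub>1\<^sub>1 = 1\<close>; in \<open>D\<close> the slack has \<open>S\<^sub>4\<^sub>4 = 0\<close>, which forces \<open>y\<^sub>3 = 0\<close>, then
  \<open>S\<^sub>3\<^sub>3 = 0\<close>, which forces \<open>y\<^sub>1 = 0\<close>.
  For \<open>\<epsilon> = t cos \<theta> > 0\<close> and \<open>\<eta> = t sin \<theta>\<close> a diagonal primal point gives \<open>v(\<epsilon>,\<eta>) \<le> 1 + O(t)\<close>,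
  and a dual point of \<open>D(\<epsilon>,\<eta>)\<close> with \<open>y\<^sub>3 = -t\<^bsup>3/4\<^esup>\<close> gives \<open>v(\<epsilon>,\<eta>) \<ge> 1 - O(t\<^bsup>1/4\<^esup>)\<close>.
  For \<open>\<epsilon> = 0\<close> and \<open>\<eta> > 0\<close> the second row is no longer forced to vanish: with \<open>X\<^sub>2\<^sub>3 = 1/2\<close> and \<open>X\<^sub>3\<^sub>3 = 1/(4\<eta>)\<close>
  the value \<open>X\<^sub>1\<^sub>1 = \<eta>\<close> is feasible, so \<open>v(0,\<eta>) \<le> \<eta>\<close>.\<close>

lemma psd_symmetric: "psd X \<Longrightarrow> X$j$i = X$i$j"
  unfolding psd_def by (metis transpose_def vec_lambda_beta)

lemma psd_pair_form:
  assumes "psd X"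
  shows "0 \<le> a\<^sup>2 * X$i$i + 2 * a * b * X$i$j + b\<^sup>2 * X$j$j"
proof -
  let ?x = "a *\<^sub>R axis i 1 + b *\<^sub>R axis j (1::real)"
  have "?x \<bullet> (X *v ?x) = a\<^sup>2 * X$i$i + a * b * (X$i$j + X$j$i) + b\<^sup>2 * X$j$j"
    by (simp add: algebra_simps matrix_vector_mult_basis inner_axis' column_def power2_eq_square)
  moreover have "0 \<le> ?x \<bullet> (X *v ?x)"
    using assms unfolding psd_def by blast
  ultimately show ?thesis
    using psd_symmetric[OF assms, of i j] by (simp add: algebra_simps)
qed

lemma psd_diag_nonneg: "psd X \<Longrightarrow> 0 \<le> X$i$i"
  using psd_pair_form[where a = 1 and b = 0 and j = i] by simp

lemma psd_zero_diag_row: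
  assumes "psd X" "X$i$i = 0"
  shows "X$i$j = 0"
proof (rule ccontr)
  assume nz: "X$i$j \<noteq> 0"
  define a where "a = - (X$j$j + 1) / (2 * X$i$j)"
  have "0 \<le> a\<^sup>2 * X$i$i + 2 * a * 1 * X$i$j + 1\<^sup>2 * X$j$j"
    by (rule psd_pair_form[OF assms(1)])
  also have "\<dots> = -1"
    using nz assms(2) by (simp add: a_def field_simps)
  finally show False by simp
qed

lemma psd_trace_nonneg: "psd X \<Longrightarrow> 0 \<le> trace X"
  unfolding trace_def by (simp add: sum_nonneg psd_diag_nonneg)

lemma v_reg_zero: "v_reg C A b 0 0 = primal_val C A b"
  by (simp add: v_reg_def)

lemma quadratic_form_4:
  fixes X :: "real^4^4"
  shows "x \<bullet> (X *v x) =
    x$1 * (X$1$1 * x$1 + X$1$2 * x$2 + X$1$3 * x$3 + X$1$4 * x$4) +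
    x$2 * (X$2$1 * x$1 + X$2$2 * x$2 + X$2$3 * x$3 + X$2$4 * x$4) +
    x$3 * (X$3$1 * x$1 + X$3$2 * x$2 + X$3$3 * x$3 + X$3$4 * x$4) +
    x$4 * (X$4$1 * x$1 + X$4$2 * x$2 + X$4$3 * x$3 + X$4$4 * x$4)"
  by (simp add: inner_vec_def matrix_vector_mult_def sum_4)

lemma frob_4:
  fixes A X :: "real^4^4"
  shows "A \<bullet>\<^sub>F X =
    A$1$1 * X$1$1 + A$1$2 * X$1$2 + A$1$3 * X$1$3 + A$1$4 * X$1$4 +
    A$2$1 * X$2$1 + A$2$2 * X$2$2 + A$2$3 * X$2$3 + A$2$4 * X$2$4 +
    A$3$1 * X$3$1 + A$3$2 * X$3$2 + A$3$3 * X$3$3 + A$3$4 * X$3$4 +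
    A$4$1 * X$4$1 + A$4$2 * X$4$2 + A$4$3 * X$4$3 + A$4$4 * X$4$4"
  by (simp add: frob_def sum_4 add.assoc)

definition example_feasible :: "real \<Rightarrow> real^4^4 \<Rightarrow> bool" where
  "example_feasible \<eta> X \<longleftrightarrow> psd X \<and> X$1$1 + 2 * X$2$3 = 1 + \<eta> \<and> X$2$2 = \<eta> \<and>
     2 * X$1$3 + 2 * X$1$4 + X$3$3 = \<eta>"

lemma v_reg_example:
  "v_reg C_ex A_ex b_ex \<epsilon> \<eta> = Inf {X$1$1 + \<epsilon> * trace X | X. example_feasible \<eta> X}"
proof -
  have objective: "(C_ex + \<epsilon> *\<^sub>R mat 1) \<bullet>\<^sub>F X = X$1$1 + \<epsilon> * trace X" for X :: "real^4^4"
    by (simp add: frob_4 trace_def sum_4 C_ex_def mat_def algebra_simps)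
  have constraints: "(\<forall>i. A_ex i \<bullet>\<^sub>F X = (\<chi> i. b_ex$i + \<eta> * (A_ex i \<bullet>\<^sub>F mat 1))$i) \<longleftrightarrow>
      X$1$1 + X$2$3 + X$3$2 = 1 + \<eta> \<and> X$2$2 = \<eta> \<and> X$1$3 + X$3$1 + X$1$4 + X$4$1 + X$3$3 = \<eta>"
    for X :: "real^4^4"
    by (simp add: forall_3 frob_4 A_ex_def A1_ex_def A2_ex_def A3_ex_def mat_def b_ex_def) argo
  have feasible: "psd X \<and> (\<forall>i. A_ex i \<bullet>\<^sub>F X = (\<chi> i. b_ex$i + \<eta> * (A_ex i \<bullet>\<^sub>F mat 1))$i) \<longleftrightarrow>
      example_feasible \<eta> X" for X :: "real^4^4"
    unfolding constraints example_feasible_def using psd_symmetric[of X] by auto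
  show ?thesis
    unfolding v_reg_def primal_val_def objective feasible ..
qed

lemma psd_C_ex: "psd C_ex"
  unfolding psd_def by (auto simp: quadratic_form_4 C_ex_def vec_eq_iff transpose_def forall_4)

lemma example_feasible_0_top_left: "example_feasible 0 X \<Longrightarrow> X$1$1 = 1"
  unfolding example_feasible_def using psd_zero_diag_row[of X 2 3] by simp

lemma primal_val_example: "primal_val C_ex A_ex b_ex = 1"
proof -
  have "example_feasible 0 C_ex"
    using psd_C_ex unfolding example_feasible_def by (simp add: C_ex_def)
  then have "{X$1$1 + 0 * trace X | X. example_feasible 0 X} = {1}"
    using example_feasible_0_top_left by (force simp: C_ex_def)
  then show ?thesis
    using v_reg_example[of 0 0] by (simp add: v_reg_zero)
qed

lemma dual_val_example: "dual_val C_ex A_ex b_ex = 0"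
proof -
  have "b_ex \<bullet> y = 0" if S: "psd (C_ex - (\<Sum>i\<in>UNIV. y$i *\<^sub>R A_ex i))" for y
  proof -
    let ?S = "C_ex - (\<Sum>i\<in>UNIV. y$i *\<^sub>R A_ex i)"
    have entries: "?S$4$4 = 0" "?S$4$1 = - y$3" "?S$3$3 = - y$3" "?S$3$2 = - y$1"
      by (simp_all add: sum_3 C_ex_def A_ex_def A1_ex_def A2_ex_def A3_ex_def)
    then have "y$3 = 0"
      using psd_zero_diag_row[OF S, of 4 1] by simp
    then have "y$1 = 0"
      using psd_zero_diag_row[OF S, of 3 2] entries by simp
    then show ?thesis
      by (simp add: inner_vec_def sum_3 b_ex_def)
  qed
  then have "{b_ex \<bullet> y | y. psd (C_ex - (\<Sum>i\<in>UNIV. y$i *\<^sub>R A_ex i))} = {0}"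
    using psd_C_ex by (auto intro!: exI[of _ 0])
  then show ?thesis
    unfolding dual_val_def by simp
qed

lemma example_value_nonneg:
  "0 \<le> \<epsilon> \<Longrightarrow> example_feasible \<eta> X \<Longrightarrow> 0 \<le> X$1$1 + \<epsilon> * trace X"
  unfolding example_feasible_def using psd_diag_nonneg[of X] psd_trace_nonneg[of X] by simp

lemma example_feasible_diag:
  assumes "0 \<le> \<eta>"
  shows "example_feasible \<eta> (\<chi> i j. if i = j then if i = 1 then 1 + \<eta> else if i = 4 then 0 else \<eta> else 0)"
    (is "example_feasible \<eta> ?D")
proof -
  have "x \<bullet> (?D *v x) = (1 + \<eta>) * (x$1)\<^sup>2 + \<eta> * (x$2)\<^sup>2 + \<eta> * (x$3)\<^sup>2" for x
    unfolding quadratic_form_4 by (simp add: power2_eq_square algebra_simps)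
  then have "psd ?D"
    using assms unfolding psd_def by (auto simp: vec_eq_iff transpose_def)
  then show ?thesis
    unfolding example_feasible_def by simp
qed

lemma v_reg_example_nonneg:
  assumes "0 \<le> \<epsilon>" "0 \<le> \<eta>"
  shows "0 \<le> v_reg C_ex A_ex b_ex \<epsilon> \<eta>"
  unfolding v_reg_example
  using example_feasible_diag[OF assms(2)] example_value_nonneg[OF assms(1)]
  by (auto intro!: cInf_greatest)

lemma v_reg_example_le:
  assumes "0 \<le> \<epsilon>" "example_feasible \<eta> X"
  shows "v_reg C_ex A_ex b_ex \<epsilon> \<eta> \<le> X$1$1 + \<epsilon> * trace X"
  unfolding v_reg_example
proof (rule cInf_lower)
  show "X$1$1 + \<epsilon> * trace X \<in> {X$1$1 + \<epsilon> * trace X | X. example_feasible \<eta> X}"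
    using assms(2) by blast
  show "bdd_below {X$1$1 + \<epsilon> * trace X | X. example_feasible \<eta> X}"
    by (rule bdd_belowI[where m = 0]) (use example_value_nonneg[OF assms(1)] in blast)
qed

lemma v_reg_example_upper:
  assumes "0 \<le> \<epsilon>" "0 \<le> \<eta>"
  shows "v_reg C_ex A_ex b_ex \<epsilon> \<eta> \<le> 1 + \<eta> + \<epsilon> * (1 + 3 * \<eta>)"
  using v_reg_example_le[OF assms(1) example_feasible_diag[OF assms(2)]]
  by (simp add: trace_def sum_4 add.commute)

text \<open>The bound is weak duality for the dual point \<open>y = (1 - \<delta>, -2(1 - \<delta>)\<^sup>2/s, -s)\<close> of
  \<open>D(\<epsilon>,\<eta>)\<close>: its slack \<open>C + \<epsilon>I - \<Sum>\<^sub>i y\<^sub>i A\<^sup>i\<close> is \<open>\<epsilon> diag(1,1,1,0)\<close> plus three rank-one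
  matrices, and the three 2\<times>2 forms below are, up to positive factors, their inner products
  with \<open>X\<close>.\<close>

lemma v_reg_example_lower:
  assumes "0 < \<epsilon>" "0 \<le> \<eta>" "0 < s"
  defines "\<delta> \<equiv> s\<^sup>2 / \<epsilon> + 2 * s"
  shows "(1 + \<eta>) * (1 - \<delta>) - \<eta> * (2 * (1 - \<delta>)\<^sup>2 / s) - \<eta> * s \<le> v_reg C_ex A_ex b_ex \<epsilon> \<eta>"
  unfolding v_reg_example
proof (rule cInf_greatest)
  show "{X$1$1 + \<epsilon> * trace X | X. example_feasible \<eta> X} \<noteq> {}"
    using example_feasible_diag[OF assms(2)] by blast
  fix z assume "z \<in> {X$1$1 + \<epsilon> * trace X | X. example_feasible \<eta> X}"
  then obtain X where z: "z = X$1$1 + \<epsilon> * trace X" and X: "example_feasible \<eta> X"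
    by blast
  have psd: "psd X" and X22: "X$2$2 = \<eta>" and X23: "X$2$3 = (1 + \<eta> - X$1$1) / 2"
    and X14: "X$1$4 = (\<eta> - X$3$3 - 2 * X$1$3) / 2"
    using X by (simp_all add: example_feasible_def)
  have q1: "0 \<le> s\<^sup>2 * X$1$1 + 2 * s * \<epsilon> * X$1$4 + \<epsilon>\<^sup>2 * X$4$4"
    by (rule psd_pair_form[OF psd])
  have q2: "0 \<le> (2 * s)\<^sup>2 * X$1$1 + 2 * (2 * s) * s * X$1$3 + s\<^sup>2 * X$3$3"
    by (rule psd_pair_form[OF psd])
  have q3: "0 \<le> (2 * (1 - \<delta>))\<^sup>2 * X$2$2 + 2 * (2 * (1 - \<delta>)) * (- s) * X$2$3 + (- s)\<^sup>2 * X$3$3"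
    by (rule psd_pair_form[OF psd])
  have "z - ((1 + \<eta>) * (1 - \<delta>) - \<eta> * (2 * (1 - \<delta>)\<^sup>2 / s) - \<eta> * s) =
      (s\<^sup>2 * X$1$1 + 2 * s * \<epsilon> * X$1$4 + \<epsilon>\<^sup>2 * X$4$4) / \<epsilon> +
      ((2 * s)\<^sup>2 * X$1$1 + 2 * (2 * s) * s * X$1$3 + s\<^sup>2 * X$3$3) / (2 * s) +
      ((2 * (1 - \<delta>))\<^sup>2 * X$2$2 + 2 * (2 * (1 - \<delta>)) * (- s) * X$2$3 + (- s)\<^sup>2 * X$3$3) / (2 * s) +
      \<epsilon> * (X$1$1 + X$2$2 + X$3$3)"
    using assms(1,3) unfolding z trace_def sum_4 \<delta>_def X22 X23 X14
    by (simp add: field_simps power2_eq_square)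
  moreover have "0 \<le> \<epsilon> * (X$1$1 + X$2$2 + X$3$3)"
    using assms(1) psd_diag_nonneg[OF psd] by simp
  ultimately show "(1 + \<eta>) * (1 - \<delta>) - \<eta> * (2 * (1 - \<delta>)\<^sup>2 / s) - \<eta> * s \<le> z"
    using q1 q2 q3 assms(1,3) by (smt (verit) divide_nonneg_pos)
qed

lemma v_reg_example_eps_zero_upper:
  assumes "0 < \<eta>"
  shows "v_reg C_ex A_ex b_ex 0 \<eta> \<le> \<eta>"
proof -
  define m where "m = (\<eta> - 1 / (4 * \<eta>)) / 2"
  define Y :: "real^4^4" where "Y = (\<chi> i j.
    if i = 1 \<and> j = 1 then \<eta> else
    if (i = 1 \<and> j = 4) \<or> (i = 4 \<and> j = 1) then m else
    if i = 4 \<and> j = 4 then m\<^sup>2 / \<eta> else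
    if i = 2 \<and> j = 2 then \<eta> else
    if (i = 2 \<and> j = 3) \<or> (i = 3 \<and> j = 2) then 1 / 2 else
    if i = 3 \<and> j = 3 then 1 / (4 * \<eta>) else 0)"
  have entries:
    "Y$1$1 = \<eta>" "Y$1$2 = 0" "Y$1$3 = 0" "Y$1$4 = m"
    "Y$2$1 = 0" "Y$2$2 = \<eta>" "Y$2$3 = 1 / 2" "Y$2$4 = 0"
    "Y$3$1 = 0" "Y$3$2 = 1 / 2" "Y$3$3 = 1 / (4 * \<eta>)" "Y$3$4 = 0"
    "Y$4$1 = m" "Y$4$2 = 0" "Y$4$3 = 0" "Y$4$4 = m\<^sup>2 / \<eta>"
    unfolding Y_def by simp_all
  have "x \<bullet> (Y *v x) = ((\<eta> * x$1 + m * x$4)\<^sup>2 + (\<eta> * x$2 + x$3 / 2)\<^sup>2) / \<eta>" for x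
    unfolding quadratic_form_4 entries using assms by (simp add: power2_eq_square field_simps)
  then have "psd Y"
    using assms unfolding psd_def by (auto simp: Y_def vec_eq_iff transpose_def forall_4)
  then have "example_feasible \<eta> Y"
    using assms unfolding example_feasible_def entries m_def by (simp add: field_simps)
  then show ?thesis
    using v_reg_example_le[of 0 \<eta> Y] entries by simp
qed

lemma v_reg_example_tendsto_primal:
  assumes "\<theta> \<in> {0..<pi/2}"
  shows "((\<lambda>t. v_reg C_ex A_ex b_ex (t * cos \<theta>) (t * sin \<theta>)) \<longlongrightarrow> 1) (at_right 0)"
proof -
  define c where "c = cos \<theta>"
  define w where "w = sin \<theta>"
  have c: "0 < c"
    unfolding c_def using assms by (intro cos_gt_zero_pi) auto
  have w: "0 \<le> w"
    unfolding w_def using assms by (intro sin_ge_zero) auto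
  define \<delta> where "\<delta> u = u\<^sup>2 / c + 2 * u ^ 3" for u :: real
  define L where "L u = (1 + u ^ 4 * w) * (1 - \<delta> u) - 2 * u * w * (1 - \<delta> u)\<^sup>2 - u ^ 7 * w"
    for u :: real
  define U where "U t = 1 + t * w + t * c * (1 + 3 * (t * w))" for t :: real
  have bounds: "L (root 4 t) \<le> v_reg C_ex A_ex b_ex (t * c) (t * w) \<and>
      v_reg C_ex A_ex b_ex (t * c) (t * w) \<le> U t" if t: "0 < t" for t
  proof
    define u where "u = root 4 t"
    have u: "0 < u" and tu: "t = u ^ 4"
      using t by (simp_all add: u_def real_root_pow_pos)
    have "(1 + t * w) * (1 - ((u ^ 3)\<^sup>2 / (t * c) + 2 * u ^ 3))
        - t * w * (2 * (1 - ((u ^ 3)\<^sup>2 / (t * c) + 2 * u ^ 3))\<^sup>2 / u ^ 3) - t * w * u ^ 3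
        \<le> v_reg C_ex A_ex b_ex (t * c) (t * w)"
      using t c w u by (intro v_reg_example_lower) simp_all
    moreover have "(u ^ 3)\<^sup>2 / (t * c) = u\<^sup>2 / c"
      unfolding tu using u c by (simp add: field_simps power2_eq_square eval_nat_numeral)
    moreover have "t * w * (2 * Z / u ^ 3) = 2 * u * w * Z" for Z
      unfolding tu using u by (simp add: field_simps eval_nat_numeral)
    moreover have "t * w * u ^ 3 = u ^ 7 * w"
      unfolding tu by (simp add: algebra_simps flip: power_add)
    ultimately have "L u \<le> v_reg C_ex A_ex b_ex (t * c) (t * w)"
      unfolding L_def \<delta>_def tu by simp
    then show "L (root 4 t) \<le> v_reg C_ex A_ex b_ex (t * c) (t * w)"
      by (simp add: u_def)
    show "v_reg C_ex A_ex b_ex (t * c) (t * w) \<le> U t"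
      unfolding U_def using t c w by (intro v_reg_example_upper) simp_all
  qed
  have "((\<lambda>t. L (root 4 t)) \<longlongrightarrow> L (root 4 0)) (at_right 0)"
    unfolding L_def \<delta>_def using c by (intro tendsto_intros) auto
  then have lower: "((\<lambda>t. L (root 4 t)) \<longlongrightarrow> 1) (at_right 0)"
    by (simp add: L_def \<delta>_def)
  have "(U \<longlongrightarrow> U 0) (at_right 0)"
    unfolding U_def by (intro tendsto_intros)
  then have upper: "(U \<longlongrightarrow> 1) (at_right 0)"
    by (simp add: U_def)
  show ?thesis
    unfolding c_def[symmetric] w_def[symmetric]
    by (rule tendsto_sandwich[OF _ _ lower upper])
      (use eventually_at_right_less[of 0] bounds in \<open>auto elim: eventually_mono\<close>)
qed

lemma v_reg_example_tendsto_dual: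
  "((\<lambda>t. v_reg C_ex A_ex b_ex (t * cos (pi/2)) (t * sin (pi/2))) \<longlongrightarrow> 0) (at_right 0)"
proof -
  have "0 \<le> v_reg C_ex A_ex b_ex 0 t \<and> v_reg C_ex A_ex b_ex 0 t \<le> t" if "0 < t" for t
    using that v_reg_example_nonneg[of 0 t] v_reg_example_eps_zero_upper[of t] by simp
  then show ?thesis
    by (intro tendsto_sandwich[OF _ _ tendsto_const tendsto_ident_at])
      (use eventually_at_right_less[of 0] in \<open>auto elim: eventually_mono\<close>)
qed

theorem theorem3:
  shows "primal_val C_ex A_ex b_ex = 1 \<and> dual_val C_ex A_ex b_ex = 0 \<and>
    (\<forall>\<theta>\<in>{0..<pi/2}.
       ((\<lambda>t. v_reg C_ex A_ex b_ex (t * cos \<theta>) (t * sin \<theta>)) \<longlongrightarrow> primal_val C_ex A_ex b_ex) (at_right 0)) \<and>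
    ((\<lambda>t. v_reg C_ex A_ex b_ex (t * cos (pi/2)) (t * sin (pi/2))) \<longlongrightarrow> dual_val C_ex A_ex b_ex) (at_right 0)"
  unfolding primal_val_example dual_val_example
  using v_reg_example_tendsto_primal v_reg_example_tendsto_dual by blast

end
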